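(* Let $n\ge1$, $\omega\in(0,1)$, and let $B_1,\dots,B_n$ be independent real-valued service times with finite means $\mu_i$ and variances, satisfying $B_1\le_{\mathrm{dil}}\cdots\le_{\mathrm{dil}}B_n$. Then there is a sequence $\tau\in\mathsf S_n$ minimizing $C(\tau,\boldsymbol\mu,\omega)$ over $\mathsf S_n$ that satisfies $\tau(n)=n$.
   Context: Appointment model: a sequence is a permutation $\tau\in\mathsf S_n$, $\tau(i)$ the patient in slot $i$; a schedule is $\boldsymbol x=(x_1,\dots,x_n)$, $x_j$ the interarrival time between patient $j$ and the next patient; the mean-based schedule is $\boldsymbol\mu=(\mu_1,\dots,\mu_n)$. Waiting and idle times: $W_1=I_1=0$, $W_{i+1}=(W_i+B_{\tau(i)}-x_{\tau(i)})^+$, $I_{i+1}=(W_i+B_{\tau(i)}-x_{\tau(i)})^-$, $a^+=\max\{0,a\}$, $a^-=\max\{0,-a\}$. Cost $C(\tau,\boldsymbol x,\omega)=\omega\sum_{i=1}^n\mathbb EI_i+(1-\omega)\sum_{i=1}^n\mathbb EW_i$. $X\le_{\mathrm{cx}}Y$ means $\mathbb E\phi(X)\le\mathbb E\phi(Y)$ for all convex $\phi$ for which the expectations exist; $X\le_{\mathrm{dil}}Y$ means $X-\mathbb EX\le_{\mathrm{cx}}Y-\mathbb EY$. *)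

theory Defs
  imports "HOL-Probability.Probability" "HOL-Combinatorics.Permutations"
begin

text \<open>Pathwise waiting times, 1-indexed: wt tau x b i is W_i for i \<ge> 1,
  with W_1 = 0 and W_(i+1) = (W_i + b(tau i) - x(tau i))^+.
  Here b j is the realised service time of patient j, x j the interarrival time after patient j.\<close>
fun wt :: "(nat \<Rightarrow> nat) \<Rightarrow> (nat \<Rightarrow> real) \<Rightarrow> (nat \<Rightarrow> real) \<Rightarrow> nat \<Rightarrow> real" where
  "wt tau x b 0 = 0"
| "wt tau x b (Suc i) =
     (if i = 0 then 0 else max 0 (wt tau x b i + b (tau i) - x (tau i)))"

fun idl :: "(nat \<Rightarrow> nat) \<Rightarrow> (nat \<Rightarrow> real) \<Rightarrow> (nat \<Rightarrow> real) \<Rightarrow> nat \<Rightarrow> real" where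
  "idl tau x b 0 = 0"
| "idl tau x b (Suc i) =
     (if i = 0 then 0 else max 0 (- (wt tau x b i + b (tau i) - x (tau i))))"

definition cost :: "'s measure \<Rightarrow> (nat \<Rightarrow> 's \<Rightarrow> real) \<Rightarrow> nat \<Rightarrow> (nat \<Rightarrow> nat)
    \<Rightarrow> (nat \<Rightarrow> real) \<Rightarrow> real \<Rightarrow> real" where
  "cost M B n tau x \<omega> =
     \<omega> * (\<Sum>i=1..n. integral\<^sup>L M (\<lambda>s. idl tau x (\<lambda>j. B j s) i))
     + (1 - \<omega>) * (\<Sum>i=1..n. integral\<^sup>L M (\<lambda>s. wt tau x (\<lambda>j. B j s) i))"

definition cx_le :: "'s measure \<Rightarrow> ('s \<Rightarrow> real) \<Rightarrow> ('s \<Rightarrow> real) \<Rightarrow> bool" where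
  "cx_le M X Y \<longleftrightarrow>
     (\<forall>\<phi> :: real \<Rightarrow> real. convex_on UNIV \<phi> \<longrightarrow>
        integrable M (\<lambda>s. \<phi> (X s)) \<longrightarrow> integrable M (\<lambda>s. \<phi> (Y s)) \<longrightarrow>
        integral\<^sup>L M (\<lambda>s. \<phi> (X s)) \<le> integral\<^sup>L M (\<lambda>s. \<phi> (Y s)))"

definition dil_le :: "'s measure \<Rightarrow> ('s \<Rightarrow> real) \<Rightarrow> ('s \<Rightarrow> real) \<Rightarrow> bool" where
  "dil_le M X Y \<longleftrightarrow>
     cx_le M (\<lambda>s. X s - integral\<^sup>L M X) (\<lambda>s. Y s - integral\<^sup>L M Y)"

end

theory Submission
  imports Defs
begin

text \<open>Under the mean-based schedule the waiting times follow the Lindley recursion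
  W(i+1) = (W(i) + y(i))^+ driven by the centred services y(i) = B(\<tau> i) - \<mu>(\<tau> i), and the
  idle times telescope to W(n) minus a sum of the y(i), which has mean zero. Hence the cost of
  \<tau> is the expectation of \<omega> W(n) + (1 - \<omega>) (W(1) + ... + W(n)), a function of
  y(1), ..., y(n-1) alone that is convex in each coordinate.

  If an optimal sequence puts patient n into slot k < n, exchange slots k and n: slot k receives
  the patient m formerly last, and the last slot does not matter. Conditioning on the independent
  services of the other patients, convexity and B(m) \<le>dil B(n) show that the expected cost does
  not increase, so the new sequence is optimal and ends with patient n.\<close>

lemma convex_on_max:
  fixes f g :: "'a::real_vector \<Rightarrow> real"
  assumes "convex_on S f" "convex_on S g"
  shows "convex_on S (\<lambda>x. max (f x) (g x))"
proof (rule convex_onI)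
  fix t :: real and x y assume t: "0 < t" "t < 1" and xy: "x \<in> S" "y \<in> S"
  have "f ((1 - t) *\<^sub>R x + t *\<^sub>R y) \<le> (1 - t) * max (f x) (g x) + t * max (f y) (g y)"
    using convex_onD[OF assms(1), of t x y] t xy
    by (smt (verit, best) max.cobounded1 mult_left_mono)
  moreover have "g ((1 - t) *\<^sub>R x + t *\<^sub>R y) \<le> (1 - t) * max (f x) (g x) + t * max (f y) (g y)"
    using convex_onD[OF assms(2), of t x y] t xy
    by (smt (verit, best) max.cobounded2 mult_left_mono)
  ultimately show "max (f ((1 - t) *\<^sub>R x + t *\<^sub>R y)) (g ((1 - t) *\<^sub>R x + t *\<^sub>R y))
      \<le> (1 - t) * max (f x) (g x) + t * max (f y) (g y)" by simp
qed (use assms convex_on_imp_convex in blast)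

lemma convex_on_sum_fun:
  assumes "convex S" "\<And>i. i \<in> I \<Longrightarrow> convex_on S (f i)"
  shows "convex_on S (\<lambda>x. \<Sum>i\<in>I. f i x)"
proof (cases "finite I")
  case True
  then show ?thesis using assms(2)
    by (induction I rule: finite_induct) (auto simp: convex_on_const assms(1))
qed (simp add: convex_on_const assms(1))

lemma convex_on_UNIV_borel_measurable:
  fixes \<phi> :: "real \<Rightarrow> real"
  shows "convex_on UNIV \<phi> \<Longrightarrow> \<phi> \<in> borel_measurable borel"
  by (intro borel_measurable_continuous_onI convex_on_continuous) auto

lemma ex_min_permutes:
  fixes f :: "('a \<Rightarrow> 'a) \<Rightarrow> 'b::linorder"
  assumes "finite S"
  shows "\<exists>\<tau>. \<tau> permutes S \<and> (\<forall>\<sigma>. \<sigma> permutes S \<longrightarrow> f \<tau> \<le> f \<sigma>)"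
proof -
  have "finite {\<sigma>. \<sigma> permutes S}" "{\<sigma>. \<sigma> permutes S} \<noteq> {}"
    using assms finite_permutations permutes_id by blast+
  then show ?thesis
    using arg_min_if_finite(1) arg_min_least by (metis mem_Collect_eq)
qed

lemma integrable_linear_growth:
  fixes \<phi> :: "real \<Rightarrow> real"
  assumes "finite_measure M" "integrable M X" "\<phi> \<in> borel_measurable borel"
    and "\<And>t. \<bar>\<phi> t\<bar> \<le> a + c * \<bar>t\<bar>"
  shows "integrable M (\<lambda>s. \<phi> (X s))"
proof (rule Bochner_Integration.integrable_bound)
  interpret finite_measure M by fact
  show "integrable M (\<lambda>s. a + c * \<bar>X s\<bar>)" using assms(2) by auto
  show "(\<lambda>s. \<phi> (X s)) \<in> borel_measurable M" using assms(2,3) by measurable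
  show "AE s in M. norm (\<phi> (X s)) \<le> norm (a + c * \<bar>X s\<bar>)"
    using assms(4) by (auto intro!: AE_I2 order_trans[OF _ abs_ge_self])
qed

lemma nn_integral_le_iff_integral_le:
  fixes f g :: "'a \<Rightarrow> real"
  assumes "integrable M f" "integrable M g" "\<And>x. 0 \<le> f x" "\<And>x. 0 \<le> g x"
  shows "(\<integral>\<^sup>+ x. f x \<partial>M) \<le> (\<integral>\<^sup>+ x. g x \<partial>M) \<longleftrightarrow> integral\<^sup>L M f \<le> integral\<^sup>L M g"
  using assms by (simp add: nn_integral_eq_integral ennreal_le_iff integral_nonneg_AE)

lemma dil_le_chain:
  fixes X :: "nat \<Rightarrow> 's \<Rightarrow> real" and \<phi> :: "real \<Rightarrow> real"
  assumes "prob_space M" "m \<le> j"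
    and integrable: "\<And>i. m \<le> i \<Longrightarrow> i \<le> j \<Longrightarrow> integrable M (X i)"
    and dil: "\<And>i. m \<le> i \<Longrightarrow> i < j \<Longrightarrow> dil_le M (X i) (X (Suc i))"
    and \<phi>: "convex_on UNIV \<phi>" "\<And>t. \<bar>\<phi> t\<bar> \<le> a + c * \<bar>t\<bar>"
  shows "(\<integral>s. \<phi> (X m s - integral\<^sup>L M (X m)) \<partial>M) \<le> (\<integral>s. \<phi> (X j s - integral\<^sup>L M (X j)) \<partial>M)"
  using \<open>m \<le> j\<close> integrable dil
proof (induction j rule: dec_induct)
  case (step j)
  interpret prob_space M by fact
  have "integrable M (\<lambda>s. \<phi> (X i s - integral\<^sup>L M (X i)))" if "m \<le> i" "i \<le> Suc j" for i
    using finite_measure_axioms _ convex_on_UNIV_borel_measurable[OF \<phi>(1)] \<phi>(2)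
    by (rule integrable_linear_growth) (use step.prems(1)[OF that] in simp)
  then have "(\<integral>s. \<phi> (X j s - integral\<^sup>L M (X j)) \<partial>M)
      \<le> (\<integral>s. \<phi> (X (Suc j) s - integral\<^sup>L M (X (Suc j))) \<partial>M)"
    using step.prems(2)[of j] step.hyps \<phi>(1) unfolding dil_le_def cx_le_def by simp
  with step show ?case by simp
qed simp

lemma nn_integral_indep_var:
  assumes "prob_space M" "prob_space.indep_var M N1 X N2 Y"
    and f: "f \<in> borel_measurable (N1 \<Otimes>\<^sub>M N2)"
  shows "(\<integral>\<^sup>+ s. f (X s, Y s) \<partial>M) = (\<integral>\<^sup>+ x. (\<integral>\<^sup>+ s. f (x, Y s) \<partial>M) \<partial>distr M N1 X)"
proof -
  interpret prob_space M by fact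
  have X: "X \<in> measurable M N1" and Y: "Y \<in> measurable M N2"
    using assms(2) by (rule indep_var_rv1, rule indep_var_rv2)
  interpret PY: prob_space "distr M N2 Y" by (rule prob_space_distr[OF Y])
  have "(\<integral>\<^sup>+ s. f (X s, Y s) \<partial>M) = (\<integral>\<^sup>+ p. f p \<partial>distr M (N1 \<Otimes>\<^sub>M N2) (\<lambda>s. (X s, Y s)))"
    using X Y f by (subst nn_integral_distr) (auto intro: measurable_Pair)
  also have "\<dots> = (\<integral>\<^sup>+ p. f p \<partial>(distr M N1 X \<Otimes>\<^sub>M distr M N2 Y))"
    using assms(2) by (simp add: indep_var_distribution_eq)
  also have "\<dots> = (\<integral>\<^sup>+ x. (\<integral>\<^sup>+ y. f (x, y) \<partial>distr M N2 Y) \<partial>distr M N1 X)"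
    using f by (intro PY.nn_integral_fst[symmetric])
      (subst measurable_cong_sets[OF sets_pair_measure_cong[OF sets_distr sets_distr] refl])
  also have "\<dots> = (\<integral>\<^sup>+ x. (\<integral>\<^sup>+ s. f (x, Y s) \<partial>M) \<partial>distr M N1 X)"
    by (intro nn_integral_cong) (simp add: nn_integral_distr Y measurable_Pair2[OF f])
  finally show ?thesis .
qed

lemma nn_integral_indep_var_mono:
  assumes "prob_space M" "prob_space.indep_var M N Z K Y"
    and "f \<in> borel_measurable (N \<Otimes>\<^sub>M K)" "g \<in> borel_measurable (N \<Otimes>\<^sub>M K)"
    and "\<And>z. z \<in> space N \<Longrightarrow> (\<integral>\<^sup>+ s. f (z, Y s) \<partial>M) \<le> (\<integral>\<^sup>+ s. g (z, Y s) \<partial>M)"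
  shows "(\<integral>\<^sup>+ s. f (Z s, Y s) \<partial>M) \<le> (\<integral>\<^sup>+ s. g (Z s, Y s) \<partial>M)"
  unfolding nn_integral_indep_var[OF assms(1,2,3)] nn_integral_indep_var[OF assms(1,2,4)]
  using assms(5) by (rule nn_integral_mono) (simp only: space_distr)

fun lindley :: "(nat \<Rightarrow> real) \<Rightarrow> nat \<Rightarrow> real" where
  "lindley y 0 = 0"
| "lindley y (Suc i) = (if i = 0 then 0 else max 0 (lindley y i + y i))"

lemma wt_eq_lindley: "wt \<tau> x b i = lindley (\<lambda>j. b (\<tau> j) - x (\<tau> j)) i"
  by (induction i) auto

lemma idl_Suc_eq_lindley:
  fixes \<tau> :: "nat \<Rightarrow> nat" and x b :: "nat \<Rightarrow> real"
  assumes "0 < i"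
  defines "y \<equiv> \<lambda>j. b (\<tau> j) - x (\<tau> j)"
  shows "idl \<tau> x b (Suc i) = lindley y (Suc i) - lindley y i - y i"
  using assms by (auto simp: wt_eq_lindley)

lemma lindley_nonneg: "0 \<le> lindley y i"
  by (induction i) auto

lemma lindley_cong: "(\<And>j. 1 \<le> j \<Longrightarrow> j < i \<Longrightarrow> y j = y' j) \<Longrightarrow> lindley y i = lindley y' i"
  by (induction i) auto

lemma lindley_le_sum_abs: "lindley y i \<le> (\<Sum>j=1..<i. \<bar>y j\<bar>)"
proof (induction i)
  case (Suc i)
  show ?case
  proof (cases "i = 0")
    case False
    then have "{1..<Suc i} = insert i {1..<i}" by auto
    then show ?thesis using Suc False by (auto simp: sum_nonneg)
  qed simp
qed simp

lemma lindley_measurable: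
  assumes "\<And>j. j \<in> {1..<i} \<Longrightarrow> (\<lambda>x. Y x j) \<in> borel_measurable N"
  shows "(\<lambda>x. lindley (Y x) i) \<in> borel_measurable N"
  using assms
proof (induction i)
  case (Suc i)
  show ?case
  proof (cases "i = 0")
    case False
    with Suc have [measurable]: "(\<lambda>x. lindley (Y x) i) \<in> borel_measurable N"
        "(\<lambda>x. Y x i) \<in> borel_measurable N"
      by auto
    show ?thesis by simp
  qed simp
qed simp

lemma convex_on_lindley_update: "convex_on UNIV (\<lambda>t. lindley (y(k := t)) i)"
proof (induction i)
  case (Suc i)
  have "convex_on UNIV (\<lambda>t. (y(k := t)) i)"
    by (cases "i = k") (simp_all add: convex_on_ident convex_on_const)
  then have "convex_on UNIV (\<lambda>t. max 0 (lindley (y(k := t)) i + (y(k := t)) i))"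
    using Suc by (intro convex_on_max convex_on_add) (simp_all add: convex_on_const del: fun_upd_apply)
  then show ?case by (cases "i = 0") (simp_all add: convex_on_const del: fun_upd_apply)
qed (simp add: convex_on_const)

definition lindley_cost :: "real \<Rightarrow> nat \<Rightarrow> (nat \<Rightarrow> real) \<Rightarrow> real" where
  "lindley_cost \<omega> n y = \<omega> * lindley y n + (1 - \<omega>) * (\<Sum>i=1..n. lindley y i)"

lemma lindley_cost_nonneg: "0 \<le> \<omega> \<Longrightarrow> \<omega> \<le> 1 \<Longrightarrow> 0 \<le> lindley_cost \<omega> n y"
  unfolding lindley_cost_def by (intro add_nonneg_nonneg mult_nonneg_nonneg sum_nonneg lindley_nonneg) auto

lemma lindley_cost_cong:
  "(\<And>j. 1 \<le> j \<Longrightarrow> j < n \<Longrightarrow> y j = y' j) \<Longrightarrow> lindley_cost \<omega> n y = lindley_cost \<omega> n y'"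
  unfolding lindley_cost_def by (intro arg_cong2[where f="(+)"] arg_cong2[where f="(*)"] sum.cong lindley_cong) auto

lemma lindley_cost_measurable:
  assumes "\<And>j. j \<in> {1..<n} \<Longrightarrow> (\<lambda>x. Y x j) \<in> borel_measurable N"
  shows "(\<lambda>x. lindley_cost \<omega> n (Y x)) \<in> borel_measurable N"
proof -
  have [measurable]: "(\<lambda>x. lindley (Y x) i) \<in> borel_measurable N" if "i \<le> n" for i
    using assms that by (intro lindley_measurable) auto
  show ?thesis unfolding lindley_cost_def by measurable
qed

lemma lindley_cost_le_sum_abs:
  assumes "0 \<le> \<omega>" "\<omega> \<le> 1"
  shows "lindley_cost \<omega> n y \<le> real (Suc n) * (\<Sum>j=1..<n. \<bar>y j\<bar>)"
proof -
  let ?S = "\<Sum>j=1..<n. \<bar>y j\<bar>"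
  have W: "lindley y i \<le> ?S" if "i \<le> n" for i
    using lindley_le_sum_abs[of y i] sum_mono2[of "{1..<n}" "{1..<i}" "\<lambda>j. \<bar>y j\<bar>"] that by auto
  have "\<omega> * lindley y n \<le> lindley y n"
    using assms lindley_nonneg by (intro mult_left_le_one_le) auto
  also have "\<dots> \<le> ?S" using W by simp
  finally have "\<omega> * lindley y n \<le> ?S" .
  moreover have "(1 - \<omega>) * (\<Sum>i=1..n. lindley y i) \<le> (\<Sum>i=1..n. lindley y i)"
    using assms lindley_nonneg by (intro mult_left_le_one_le sum_nonneg) auto
  moreover have "(\<Sum>i=1..n. lindley y i) \<le> real n * ?S"
    using sum_mono[of "{1..n}", OF W] by simp
  ultimately show ?thesis unfolding lindley_cost_def by (simp add: algebra_simps)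
qed

lemma abs_lindley_cost_update_le:
  assumes "0 \<le> \<omega>" "\<omega> \<le> 1"
  shows "\<bar>lindley_cost \<omega> n (y(k := t))\<bar> \<le> real (Suc n) * (\<Sum>j=1..<n. \<bar>y j\<bar>) + real (Suc n) * \<bar>t\<bar>"
proof -
  have "(\<Sum>j=1..<n. \<bar>(y(k := t)) j\<bar>) \<le> (\<Sum>j=1..<n. \<bar>y j\<bar> + (if j = k then \<bar>t\<bar> else 0))"
    by (intro sum_mono) auto
  also have "\<dots> \<le> (\<Sum>j=1..<n. \<bar>y j\<bar>) + \<bar>t\<bar>"
    by (simp add: sum.distrib)
  finally show ?thesis
    using lindley_cost_le_sum_abs[OF assms, of n "y(k := t)"] lindley_cost_nonneg[OF assms]
    by (smt (verit, best) distrib_left mult_left_mono of_nat_0_le_iff)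
qed

lemma convex_on_lindley_cost_update:
  assumes "0 \<le> \<omega>" "\<omega> \<le> 1"
  shows "convex_on UNIV (\<lambda>t. lindley_cost \<omega> n (y(k := t)))"
  unfolding lindley_cost_def using assms
  by (intro convex_on_add convex_on_cmul convex_on_sum_fun convex_on_lindley_update) auto

lemma integrable_lindley_cost_update:
  assumes "finite_measure M" "integrable M X" "0 \<le> \<omega>" "\<omega> \<le> 1"
  shows "integrable M (\<lambda>s. lindley_cost \<omega> n (y(k := X s)))"
  using assms(1,2) convex_on_UNIV_borel_measurable[OF convex_on_lindley_cost_update[OF assms(3,4)]]
    abs_lindley_cost_update_le[OF assms(3,4)]
  by (rule integrable_linear_growth)

locale appointment_model = prob_space M for M :: "'s measure" +
  fixes B :: "nat \<Rightarrow> 's \<Rightarrow> real" and n :: nat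
  assumes integrable_B: "\<And>i. i \<in> {1..n} \<Longrightarrow> integrable M (B i)"
begin

definition centred :: "(nat \<Rightarrow> nat) \<Rightarrow> 's \<Rightarrow> nat \<Rightarrow> real" where
  "centred \<tau> s = (\<lambda>j. B (\<tau> j) s - expectation (B (\<tau> j)))"

lemma wt_mean_schedule: "wt \<tau> (\<lambda>j. expectation (B j)) (\<lambda>j. B j s) i = lindley (centred \<tau> s) i"
  by (simp add: wt_eq_lindley centred_def)

lemma integrable_centred:
  assumes "\<tau> permutes {1..n}" "j \<in> {1..n}"
  shows "integrable M (\<lambda>s. centred \<tau> s j)"
  using integrable_B[of "\<tau> j"] permutes_in_image[OF assms(1)] assms(2) by (simp add: centred_def)

lemma expectation_centred:
  assumes "\<tau> permutes {1..n}" "j \<in> {1..n}"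
  shows "expectation (\<lambda>s. centred \<tau> s j) = 0"
  using integrable_B[of "\<tau> j"] permutes_in_image[OF assms(1)] assms(2) by (simp add: centred_def prob_space)

lemma integrable_lindley_centred:
  assumes "\<tau> permutes {1..n}" "i \<le> n"
  shows "integrable M (\<lambda>s. lindley (centred \<tau> s) i)"
proof (rule Bochner_Integration.integrable_bound)
  show "integrable M (\<lambda>s. \<Sum>j=1..<i. \<bar>centred \<tau> s j\<bar>)"
    using assms by (intro Bochner_Integration.integrable_sum integrable_abs integrable_centred) auto
  then show "(\<lambda>s. lindley (centred \<tau> s) i) \<in> borel_measurable M"
    using assms by (intro lindley_measurable borel_measurable_integrable integrable_centred) auto
  show "AE s in M. norm (lindley (centred \<tau> s) i) \<le> norm (\<Sum>j=1..<i. \<bar>centred \<tau> s j\<bar>)"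
    using lindley_le_sum_abs lindley_nonneg by (intro AE_I2) (simp add: sum_nonneg)
qed

lemma integrable_lindley_cost_centred:
  "\<tau> permutes {1..n} \<Longrightarrow> integrable M (\<lambda>s. lindley_cost \<omega> n (centred \<tau> s))"
  unfolding lindley_cost_def by (intro integrable_lindley_centred Bochner_Integration.integrable_add
      integrable_mult_right Bochner_Integration.integrable_sum) auto

lemma expectation_idl_sum:
  assumes \<tau>: "\<tau> permutes {1..n}" and "1 \<le> m" "m \<le> n"
  shows "(\<Sum>i=1..m. expectation (\<lambda>s. idl \<tau> (\<lambda>j. expectation (B j)) (\<lambda>j. B j s) i))
    = expectation (\<lambda>s. lindley (centred \<tau> s) m)"
  using assms(2,3)
proof (induction m rule: dec_induct)
  case (step m)
  let ?W = "\<lambda>i s. lindley (centred \<tau> s) i"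
  have "idl \<tau> (\<lambda>j. expectation (B j)) (\<lambda>j. B j s) (Suc m) = ?W (Suc m) s - ?W m s - centred \<tau> s m" for s
    unfolding centred_def by (rule idl_Suc_eq_lindley) (use step.hyps in simp)
  then have "expectation (\<lambda>s. idl \<tau> (\<lambda>j. expectation (B j)) (\<lambda>j. B j s) (Suc m))
      = expectation (\<lambda>s. ?W (Suc m) s - ?W m s - centred \<tau> s m)"
    by (simp only:)
  also have "\<dots> = expectation (?W (Suc m)) - expectation (?W m)"
    using step integrable_lindley_centred[OF \<tau>] integrable_centred[OF \<tau>] expectation_centred[OF \<tau>]
    by (simp del: lindley.simps)
  finally show ?case using step by simp
qed simp

lemma cost_eq_expectation_lindley_cost:
  assumes \<tau>: "\<tau> permutes {1..n}" and "1 \<le> n"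
  shows "cost M B n \<tau> (\<lambda>j. expectation (B j)) \<omega> = expectation (\<lambda>s. lindley_cost \<omega> n (centred \<tau> s))"
proof -
  let ?W = "\<lambda>i s. lindley (centred \<tau> s) i"
  have integrable_sum: "integrable M (\<lambda>s. \<Sum>i=1..n. ?W i s)"
    by (intro Bochner_Integration.integrable_sum integrable_lindley_centred[OF \<tau>]) auto
  have "expectation (\<lambda>s. lindley_cost \<omega> n (centred \<tau> s))
      = expectation (\<lambda>s. \<omega> * ?W n s) + expectation (\<lambda>s. (1 - \<omega>) * (\<Sum>i=1..n. ?W i s))"
    unfolding lindley_cost_def
    by (rule Bochner_Integration.integral_add) (use integrable_sum integrable_lindley_centred[OF \<tau>] in auto)
  also have "\<dots> = \<omega> * expectation (?W n) + (1 - \<omega>) * (\<Sum>i=1..n. expectation (?W i))"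
    using integrable_lindley_centred[OF \<tau>] by (simp add: Bochner_Integration.integral_sum)
  also have "\<dots> = cost M B n \<tau> (\<lambda>j. expectation (B j)) \<omega>"
    unfolding cost_def expectation_idl_sum[OF \<tau> \<open>1 \<le> n\<close> order_refl] wt_mean_schedule ..
  finally show ?thesis ..
qed

lemma expectation_lindley_cost_update_mono:
  assumes dil: "\<And>i. 1 \<le> i \<Longrightarrow> i < n \<Longrightarrow> dil_le M (B i) (B (Suc i))"
    and \<omega>: "0 \<le> \<omega>" "\<omega> \<le> 1" and m: "m \<in> {1..n}"
  shows "expectation (\<lambda>s. lindley_cost \<omega> n (y(k := B m s - expectation (B m))))
    \<le> expectation (\<lambda>s. lindley_cost \<omega> n (y(k := B n s - expectation (B n))))"
  using prob_space_axioms _ _ _ convex_on_lindley_cost_update[OF \<omega>] abs_lindley_cost_update_le[OF \<omega>]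
  by (rule dil_le_chain) (use m integrable_B dil in auto)

lemma nn_integral_lindley_cost_slot_mono:
  fixes \<rho> :: "nat \<Rightarrow> nat"
  assumes indep: "indep_vars (\<lambda>_. borel) B {1..n}"
    and dil: "\<And>i. 1 \<le> i \<Longrightarrow> i < n \<Longrightarrow> dil_le M (B i) (B (Suc i))"
    and \<omega>: "0 \<le> \<omega>" "\<omega> \<le> 1" and m: "m \<in> {1..n}" and J: "J \<subseteq> {1..n} - {m, n}"
  defines "other s j \<equiv> if \<rho> j \<in> J then B (\<rho> j) s - expectation (B (\<rho> j)) else 0"
  shows "(\<integral>\<^sup>+ s. lindley_cost \<omega> n ((other s)(k := B m s - expectation (B m))) \<partial>M)
    \<le> (\<integral>\<^sup>+ s. lindley_cost \<omega> n ((other s)(k := B n s - expectation (B n))) \<partial>M)"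
proof -
  have n: "n \<in> {1..n}" using m by auto
  define Z where "Z s = restrict (\<lambda>j. B j s) J" for s
  define Y where "Y s = restrict (\<lambda>j. B j s) {m, n}" for s
  define base where "base z j = (if \<rho> j \<in> J then z (\<rho> j) - expectation (B (\<rho> j)) else 0)" for z j
  define F where "F q p = ennreal (lindley_cost \<omega> n ((base (fst p))(k := snd p q - expectation (B q))))"
    for q p
  have indep_Z_Y: "indep_var (PiM J (\<lambda>_. borel)) Z (PiM {m, n} (\<lambda>_. borel)) Y"
    unfolding Z_def Y_def using m n J by (intro indep_var_restrict[OF indep]) auto
  have "(\<lambda>p. ((base (fst p))(k := snd p q - expectation (B q))) j)
      \<in> borel_measurable (PiM J (\<lambda>_. borel) \<Otimes>\<^sub>M PiM {m, n} (\<lambda>_. borel))" if "q \<in> {m, n}" for q j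
  proof -
    consider "j = k" | "j \<noteq> k" "\<rho> j \<in> J" | "j \<noteq> k" "\<rho> j \<notin> J" by blast
    then show ?thesis
    proof cases
      case 1
      then show ?thesis using that by simp measurable
    next
      case 2
      then show ?thesis by (simp add: base_def) measurable
    qed (simp add: base_def)
  qed
  then have F_measurable: "F q \<in> borel_measurable (PiM J (\<lambda>_. borel) \<Otimes>\<^sub>M PiM {m, n} (\<lambda>_. borel))"
    if "q \<in> {m, n}" for q
    unfolding F_def using that by (intro measurable_compose[OF lindley_cost_measurable] measurable_ennreal) auto
  have "(\<integral>\<^sup>+ s. F m (Z s, Y s) \<partial>M) \<le> (\<integral>\<^sup>+ s. F n (Z s, Y s) \<partial>M)"
  proof (rule nn_integral_indep_var_mono[OF prob_space_axioms indep_Z_Y F_measurable F_measurable])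
    fix z
    have "expectation (\<lambda>s. lindley_cost \<omega> n ((base z)(k := B m s - expectation (B m))))
        \<le> expectation (\<lambda>s. lindley_cost \<omega> n ((base z)(k := B n s - expectation (B n))))"
      using expectation_lindley_cost_update_mono[OF dil \<omega> m] .
    then have "(\<integral>\<^sup>+ s. lindley_cost \<omega> n ((base z)(k := B m s - expectation (B m))) \<partial>M)
        \<le> (\<integral>\<^sup>+ s. lindley_cost \<omega> n ((base z)(k := B n s - expectation (B n))) \<partial>M)"
      using m n integrable_B \<omega>
      by (subst nn_integral_le_iff_integral_le)
        (auto intro: integrable_lindley_cost_update[OF finite_measure_axioms] lindley_cost_nonneg)
    then show "(\<integral>\<^sup>+ s. F m (z, Y s) \<partial>M) \<le> (\<integral>\<^sup>+ s. F n (z, Y s) \<partial>M)"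
      by (simp add: F_def Y_def)
  qed simp_all
  moreover have "F q (Z s, Y s) = lindley_cost \<omega> n ((other s)(k := B q s - expectation (B q)))"
    if "q \<in> {m, n}" for q s
    using that unfolding F_def other_def base_def Z_def Y_def by (simp cong: if_cong)
  ultimately show ?thesis by simp
qed

lemma cost_transpose_le:
  assumes indep: "indep_vars (\<lambda>_. borel) B {1..n}"
    and dil: "\<And>i. 1 \<le> i \<Longrightarrow> i < n \<Longrightarrow> dil_le M (B i) (B (Suc i))"
    and \<omega>: "0 \<le> \<omega>" "\<omega> \<le> 1"
    and \<tau>: "\<tau> permutes {1..n}" and k: "k \<in> {1..<n}" "\<tau> k = n"
  shows "cost M B n (\<tau> \<circ> Transposition.transpose k n) (\<lambda>j. expectation (B j)) \<omega>
    \<le> cost M B n \<tau> (\<lambda>j. expectation (B j)) \<omega>"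
proof -
  define \<sigma> where "\<sigma> = \<tau> \<circ> Transposition.transpose k n"
  define m where "m = \<tau> n"
  define J where "J = {1..n} - {m, n}"
  let ?other = "\<lambda>s j. if \<tau> j \<in> J then B (\<tau> j) s - expectation (B (\<tau> j)) else 0"
  have n: "n \<in> {1..n}" using k by auto
  have \<sigma>: "\<sigma> permutes {1..n}"
    unfolding \<sigma>_def using k n by (intro permutes_compose[OF permutes_swap_id \<tau>]) auto
  have m: "m \<in> {1..n}"
    using permutes_in_image[OF \<tau>] n unfolding m_def by auto
  have \<tau>_J: "\<tau> j \<in> J" if "j \<in> {1..<n}" "j \<noteq> k" for j
    using that permutes_in_image[OF \<tau>] permutes_inj[OF \<tau>] k unfolding J_def m_def by (auto dest: injD)
  have lindley_cost_centred: "lindley_cost \<omega> n (centred \<rho> s)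
      = lindley_cost \<omega> n ((?other s)(k := B q s - expectation (B q)))"
    if "\<rho> k = q" "\<And>j. j \<in> {1..<n} \<Longrightarrow> j \<noteq> k \<Longrightarrow> \<rho> j = \<tau> j" for \<rho> q s
    by (intro lindley_cost_cong) (use that \<tau>_J in \<open>auto simp: centred_def\<close>)
  have "(\<integral>\<^sup>+ s. lindley_cost \<omega> n (centred \<sigma> s) \<partial>M)
      = (\<integral>\<^sup>+ s. lindley_cost \<omega> n ((?other s)(k := B m s - expectation (B m))) \<partial>M)"
    using k by (intro nn_integral_cong arg_cong[where f=ennreal] lindley_cost_centred)
      (auto simp: \<sigma>_def m_def)
  also have "\<dots> \<le> (\<integral>\<^sup>+ s. lindley_cost \<omega> n ((?other s)(k := B n s - expectation (B n))) \<partial>M)"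
    by (rule nn_integral_lindley_cost_slot_mono[OF indep dil \<omega> m]) (auto simp: J_def)
  also have "\<dots> = (\<integral>\<^sup>+ s. lindley_cost \<omega> n (centred \<tau> s) \<partial>M)"
    using k by (intro nn_integral_cong arg_cong[where f=ennreal] lindley_cost_centred[symmetric]) auto
  finally have "(\<integral>\<^sup>+ s. lindley_cost \<omega> n (centred \<sigma> s) \<partial>M) \<le> (\<integral>\<^sup>+ s. lindley_cost \<omega> n (centred \<tau> s) \<partial>M)" .
  then show ?thesis
    using \<sigma> \<tau> k \<omega>
    by (subst (asm) nn_integral_le_iff_integral_le)
      (auto simp: \<sigma>_def cost_eq_expectation_lindley_cost integrable_lindley_cost_centred lindley_cost_nonneg)
qed

lemma ex_permutes_last_fixed_cost_le:
  assumes indep: "indep_vars (\<lambda>_. borel) B {1..n}"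
    and dil: "\<And>i. 1 \<le> i \<Longrightarrow> i < n \<Longrightarrow> dil_le M (B i) (B (Suc i))"
    and \<omega>: "0 \<le> \<omega>" "\<omega> \<le> 1" and \<tau>: "\<tau> permutes {1..n}" and "1 \<le> n"
  shows "\<exists>\<sigma>. \<sigma> permutes {1..n} \<and> \<sigma> n = n
    \<and> cost M B n \<sigma> (\<lambda>j. expectation (B j)) \<omega> \<le> cost M B n \<tau> (\<lambda>j. expectation (B j)) \<omega>"
proof (cases "\<tau> n = n")
  case False
  define k where "k = inv \<tau> n"
  have \<tau>_k: "\<tau> k = n" and "k \<in> {1..n}"
    using permutes_inverses(1)[OF \<tau>] permutes_in_image[OF permutes_inv[OF \<tau>], of n] \<open>1 \<le> n\<close>
    unfolding k_def by auto
  moreover have "k \<noteq> n" using False \<tau>_k by auto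
  ultimately have k: "k \<in> {1..<n}" "\<tau> k = n" by auto
  have "\<tau> \<circ> Transposition.transpose k n permutes {1..n}"
    using k by (intro permutes_compose[OF permutes_swap_id \<tau>]) auto
  moreover have "(\<tau> \<circ> Transposition.transpose k n) n = n"
    using k by simp
  ultimately show ?thesis
    using cost_transpose_le[OF indep dil \<omega> \<tau> k] by blast
qed (use \<tau> in blast)

end

theorem propositionE1:
  fixes M :: "'s measure" and B :: "nat \<Rightarrow> 's \<Rightarrow> real" and n :: nat and \<omega> :: real
  assumes "prob_space M"
    and "n \<ge> 1"
    and "0 < \<omega>" and "\<omega> < 1"
    and "prob_space.indep_vars M (\<lambda>_. borel) B {1..n}"
    and "\<And>i. i \<in> {1..n} \<Longrightarrow> integrable M (B i)"
    and "\<And>i. i \<in> {1..n} \<Longrightarrow> integrable M (\<lambda>s. (B i s)\<^sup>2)"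
    and "\<And>i. 1 \<le> i \<Longrightarrow> i < n \<Longrightarrow> dil_le M (B i) (B (Suc i))"
  shows "\<exists>\<tau>. \<tau> permutes {1..n}
            \<and> (\<forall>\<sigma>. \<sigma> permutes {1..n} \<longrightarrow>
                 cost M B n \<tau> (\<lambda>j. integral\<^sup>L M (B j)) \<omega>
                   \<le> cost M B n \<sigma> (\<lambda>j. integral\<^sup>L M (B j)) \<omega>)
            \<and> \<tau> n = n"
proof -
  interpret appointment_model M B n
    by (intro appointment_model.intro appointment_model_axioms.intro) (use assms in auto)
  let ?cost = "\<lambda>\<sigma>. cost M B n \<sigma> (\<lambda>j. integral\<^sup>L M (B j)) \<omega>"
  obtain \<tau> where \<tau>: "\<tau> permutes {1..n}" and opt: "\<And>\<sigma>. \<sigma> permutes {1..n} \<Longrightarrow> ?cost \<tau> \<le> ?cost \<sigma>"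
    using ex_min_permutes[of "{1..n}" ?cost] by auto
  have "\<exists>\<sigma>. \<sigma> permutes {1..n} \<and> \<sigma> n = n \<and> ?cost \<sigma> \<le> ?cost \<tau>"
    using assms by (intro ex_permutes_last_fixed_cost_le \<tau>) auto
  then show ?thesis
    using opt by (blast intro: order_trans)
qed

end
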